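(* Let $(X,E,\ell)$ be a weighted tree and let $x\in X$. (a) If $\sum_{e\ni x}\frac{1}{1+e^{-\ell(e)}}\le\deg(x)-1$, then $x$ does not belong to the support of the diversity-maximizing measure of $X$. (b) If $\ell(e)\le\log 2$ for all $e\in E$, then no branch point of $X$ (vertex of degree at least $3$) belongs to the support of the diversity-maximizing measure of $X$.
   Context: A weighted tree is a triple $(X,E,\ell)$ with $(X,E)$ a finite simple undirected graph that is a tree and $\ell\colon E\to(0,\infty)$ edge lengths; the vertex set $X$ is a metric space with $d(x,y)$ the total length of the unique simple path between $x$ and $y$. $\deg x$ is the number of neighbours of $x$; $\sum_{e\ni x}$ is over edges containing $x$. The diversity-maximizing measure is the unique probability measure $\mu$ on $X$ minimizing $\sum_{x,y\in X}e^{-d(x,y)}\mu(x)\mu(y)$; its support is $\{x:\mu(x)>0\}$. *)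

theory Defs
  imports Complex_Main
begin

definition simple_graph :: "'a set \<Rightarrow> 'a set set \<Rightarrow> bool" where
  "simple_graph X E \<longleftrightarrow> finite X \<and> (\<forall>e\<in>E. \<exists>u v. e = {u, v} \<and> u \<in> X \<and> v \<in> X \<and> u \<noteq> v)"

definition simple_path :: "'a set set \<Rightarrow> 'a list \<Rightarrow> 'a \<Rightarrow> 'a \<Rightarrow> bool" where
  "simple_path E p x y \<longleftrightarrow> p \<noteq> [] \<and> hd p = x \<and> last p = y \<and> distinct p \<and>
     (\<forall>i. Suc i < length p \<longrightarrow> {p ! i, p ! Suc i} \<in> E)"

definition is_cycle :: "'a set set \<Rightarrow> 'a list \<Rightarrow> bool" where
  "is_cycle E c \<longleftrightarrow> length c \<ge> 3 \<and> distinct c \<and>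
     (\<forall>i. Suc i < length c \<longrightarrow> {c ! i, c ! Suc i} \<in> E) \<and> {last c, hd c} \<in> E"

definition is_tree :: "'a set \<Rightarrow> 'a set set \<Rightarrow> bool" where
  "is_tree X E \<longleftrightarrow> simple_graph X E \<and> X \<noteq> {} \<and>
     (\<forall>x\<in>X. \<forall>y\<in>X. \<exists>p. simple_path E p x y) \<and>
     (\<nexists>c. is_cycle E c)"

definition weighted_tree :: "'a set \<Rightarrow> 'a set set \<Rightarrow> ('a set \<Rightarrow> real) \<Rightarrow> bool" where
  "weighted_tree X E l \<longleftrightarrow> is_tree X E \<and> (\<forall>e\<in>E. l e > 0)"

definition path_length :: "('a set \<Rightarrow> real) \<Rightarrow> 'a list \<Rightarrow> real" where
  "path_length l p = (\<Sum>i<length p - 1. l {p ! i, p ! Suc i})"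

definition tree_dist :: "'a set set \<Rightarrow> ('a set \<Rightarrow> real) \<Rightarrow> 'a \<Rightarrow> 'a \<Rightarrow> real" where
  "tree_dist E l x y = (THE r. \<exists>p. simple_path E p x y \<and> r = path_length l p)"

definition degree :: "'a set set \<Rightarrow> 'a \<Rightarrow> nat" where
  "degree E x = card {y. {x, y} \<in> E}"

definition prob_on :: "'a set \<Rightarrow> ('a \<Rightarrow> real) \<Rightarrow> bool" where
  "prob_on X \<mu> \<longleftrightarrow> (\<forall>x\<in>X. \<mu> x \<ge> 0) \<and> (\<forall>x. x \<notin> X \<longrightarrow> \<mu> x = 0) \<and> (\<Sum>x\<in>X. \<mu> x) = 1"

definition similarity_form :: "'a set \<Rightarrow> 'a set set \<Rightarrow> ('a set \<Rightarrow> real) \<Rightarrow> ('a \<Rightarrow> real) \<Rightarrow> real" where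
  "similarity_form X E l \<mu> = (\<Sum>x\<in>X. \<Sum>y\<in>X. exp (- tree_dist E l x y) * \<mu> x * \<mu> y)"

definition maxdiv_measure :: "'a set \<Rightarrow> 'a set set \<Rightarrow> ('a set \<Rightarrow> real) \<Rightarrow> 'a \<Rightarrow> real" where
  "maxdiv_measure X E l = (THE \<mu>. prob_on X \<mu> \<and>
     (\<forall>\<nu>. prob_on X \<nu> \<longrightarrow> similarity_form X E l \<mu> \<le> similarity_form X E l \<nu>))"

definition support :: "'a set \<Rightarrow> ('a \<Rightarrow> real) \<Rightarrow> 'a set" where
  "support X \<mu> = {x\<in>X. \<mu> x > 0}"

end

theory Submission
  imports Defs "HOL-Analysis.Function_Topology"
begin

(* The diversity-maximizing measure mu minimises the quadratic form
   Q(w) = sum_{a,b} Z(a,b) w(a) w(b) with Z(a,b) = exp(-d(a,b)) over probability measures.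
   A minimiser exists by compactness, and it is unique because Z is positive definite on a tree:
   removing a leaf v with neighbour u, the identity d(v,.) = l(vu) + d(u,.) splits Q into the form
   of the smaller tree plus (1 - exp(-2 l(vu))) w(v)^2.
   At a minimiser, the potential F(z) = sum_b Z(z,b) mu(b) is minimal on the support of mu.
   Suppose mu(x) > 0 and let y be a neighbour of x, q = exp(-l(xy)). Splitting X into the branch
   behind y and its complement, F(x) = R + q A and F(y) = q R + A, so F(x) <= F(y) forces the branch
   to contribute q A >= F(x) q/(1+q) to F(x). Summing over all neighbours,
   F(x) >= mu(x) + F(x) (deg x - sum_y 1/(1+q_y)), which is > F(x) under hypothesis (a).
   For (b), l <= log 2 gives 1/(1+q) <= 2/3, and (2/3) deg x <= deg x - 1 once deg x >= 3. *)

section \<open>Simple paths in acyclic graphs\<close>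

abbreviation walk :: "'a set set \<Rightarrow> 'a list \<Rightarrow> bool" where
  "walk E p \<equiv> successively (\<lambda>a b. {a, b} \<in> E) p"

lemma simple_path_iff_walk:
  "simple_path E p x y \<longleftrightarrow> p \<noteq> [] \<and> hd p = x \<and> last p = y \<and> distinct p \<and> walk E p"
  unfolding simple_path_def successively_conv_nth by blast

lemma is_cycle_iff_walk:
  "is_cycle E c \<longleftrightarrow> length c \<ge> 3 \<and> distinct c \<and> walk E c \<and> {last c, hd c} \<in> E"
  unfolding is_cycle_def successively_conv_nth by blast

lemma simple_path_rev: "simple_path E p x y \<Longrightarrow> simple_path E (rev p) y x"
  unfolding simple_path_iff_walk by (auto simp: hd_rev last_rev insert_commute)

lemma simple_path_split:
  assumes "simple_path E (p @ v # q) x y"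
  shows "simple_path E (p @ [v]) x v" and "simple_path E (v # q) v y"
proof -
  have "walk E ((p @ [v]) @ q)" "distinct (p @ v # q)" "hd (p @ v # q) = x" "last (v # q) = y"
    using assms unfolding simple_path_iff_walk by auto
  then show "simple_path E (p @ [v]) x v" and "simple_path E (v # q) v y"
    unfolding simple_path_iff_walk successively_append_iff
    by (auto simp: hd_append successively_Cons split: if_splits)
qed

lemma simple_path_same_ends: "simple_path E p x x \<Longrightarrow> p = [x]"
  unfolding simple_path_iff_walk by (cases p) (auto split: if_splits)

lemma simple_path_distinct_ends:
  assumes "simple_path E p x y" "x \<noteq> y"
  obtains m where "p = x # m @ [y]"
proof -
  obtain m' where p: "p = x # m'" and "m' \<noteq> []"
    using assms unfolding simple_path_iff_walk by (cases p) (auto split: if_splits)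
  moreover have "last m' = y" using assms(1) p \<open>m' \<noteq> []\<close> unfolding simple_path_iff_walk by simp
  ultimately have "p = x # butlast m' @ [y]" by (metis append_butlast_last_id)
  then show thesis by (rule that)
qed

lemma cycle_of_two_paths:
  assumes p: "simple_path E p x y" and q: "simple_path E (x # m @ [y]) x y"
    and "p \<noteq> x # m @ [y]" and disj: "set p \<inter> set m = {}"
  shows "is_cycle E (p @ rev m)"
proof -
  have "x \<noteq> y" using q unfolding simple_path_iff_walk by simp
  then obtain k where pk: "p = x # k @ [y]" using p simple_path_distinct_ends by metis
  have wq: "walk E m" "{x, hd (m @ [y])} \<in> E" "m \<noteq> [] \<Longrightarrow> {last m, y} \<in> E"
    using q unfolding simple_path_iff_walk by (auto simp: successively_Cons successively_append_iff)
  have "k \<noteq> [] \<or> m \<noteq> []" using assms(3) pk by auto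
  then have "length (p @ rev m) \<ge> 3" using pk by (cases k; cases m) auto
  moreover have "distinct (p @ rev m)" using p q disj unfolding simple_path_iff_walk by auto
  moreover have "walk E (rev m)"
    using wq(1) by (simp add: successively_rev insert_commute)
  then have "walk E (p @ rev m)"
    using p wq(3) unfolding simple_path_iff_walk successively_append_iff
    by (auto simp: hd_rev insert_commute)
  moreover have "{last (p @ rev m), hd (p @ rev m)} \<in> E"
    using wq(2) pk by (cases m) (auto simp: insert_commute)
  ultimately show ?thesis unfolding is_cycle_iff_walk by blast
qed

lemma simple_path_unique:
  assumes acyclic: "\<nexists>c. is_cycle E c"
  shows "simple_path E p x y \<Longrightarrow> simple_path E q x y \<Longrightarrow> p = q"
proof (induction "length p + length q" arbitrary: p q x y rule: less_induct)
  case less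
  show ?case
  proof (cases "x = y")
    case True
    then show ?thesis using less.prems simple_path_same_ends by metis
  next
    case False
    then obtain m where q: "q = x # m @ [y]" using less.prems(2) simple_path_distinct_ends by metis
    show ?thesis
    proof (cases "set p \<inter> set m = {}")
      case True
      show ?thesis
      proof (rule ccontr)
        assume "p \<noteq> q"
        then have "is_cycle E (p @ rev m)"
          using cycle_of_two_paths[OF less.prems(1)] less.prems(2) q True by simp
        then show False using acyclic by blast
      qed
    next
      case False
      then obtain v where "v \<in> set p" "v \<in> set m" by blast
      then obtain p1 p2 m1 m2 where p: "p = p1 @ v # p2" and m: "m = m1 @ v # m2"
        by (metis split_list)
      have q': "q = (x # m1) @ v # (m2 @ [y])" using q m by simp
      note sp = simple_path_split[OF less.prems(1)[unfolded p]]
        and sq = simple_path_split[OF less.prems(2)[unfolded q']]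
      have "p1 @ [v] = (x # m1) @ [v]"
        by (rule less.hyps[OF _ sp(1) sq(1)]) (simp add: p q m)
      moreover have "v # p2 = v # m2 @ [y]"
        by (rule less.hyps[OF _ sp(2) sq(2)]) (simp add: p q m)
      ultimately show ?thesis using p q m by simp
    qed
  qed
qed

section \<open>The tree metric\<close>

lemma is_tree_simple_graph: "is_tree X E \<Longrightarrow> simple_graph X E"
  and is_tree_finite: "is_tree X E \<Longrightarrow> finite X"
  unfolding is_tree_def simple_graph_def by auto

lemma edge_in_graph:
  assumes "simple_graph X E" "{a, b} \<in> E"
  shows "a \<in> X" "b \<in> X" "a \<noteq> b"
  using assms unfolding simple_graph_def by (force simp: doubleton_eq_iff)+

lemma tree_simple_path_unique:
  "is_tree X E \<Longrightarrow> simple_path E p x y \<Longrightarrow> simple_path E q x y \<Longrightarrow> p = q"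
  unfolding is_tree_def using simple_path_unique by metis

definition tree_path :: "'a set set \<Rightarrow> 'a \<Rightarrow> 'a \<Rightarrow> 'a list" where
  "tree_path E x y = (THE p. simple_path E p x y)"

lemma simple_path_tree_path:
  assumes "is_tree X E" "x \<in> X" "y \<in> X"
  shows "simple_path E (tree_path E x y) x y"
proof -
  have "\<exists>p. simple_path E p x y" using assms unfolding is_tree_def by blast
  then have "\<exists>!p. simple_path E p x y" using tree_simple_path_unique[OF assms(1)] by blast
  then show ?thesis unfolding tree_path_def by (rule theI')
qed

lemma tree_dist_eq_path_length:
  assumes "is_tree X E" "simple_path E p x y"
  shows "tree_dist E l x y = path_length l p"
  unfolding tree_dist_def
proof (rule the_equality)
  fix r assume "\<exists>q. simple_path E q x y \<and> r = path_length l q"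
  then show "r = path_length l p" using tree_simple_path_unique[OF assms] by blast
qed (use assms(2) in blast)

lemma path_length_singleton [simp]: "path_length l [a] = 0"
  by (simp add: path_length_def)

lemma path_length_Cons_Cons [simp]: "path_length l (a # b # p) = l {a, b} + path_length l (b # p)"
  unfolding path_length_def by (simp del: sum.lessThan_Suc add: sum.lessThan_Suc_shift)

lemma path_length_Cons: "p \<noteq> [] \<Longrightarrow> path_length l (a # p) = l {a, hd p} + path_length l p"
  by (cases p) simp_all

lemma path_length_snoc: "p \<noteq> [] \<Longrightarrow> path_length l (p @ [a]) = path_length l p + l {last p, a}"
  by (induction p rule: induct_list012) simp_all

lemma path_length_rev: "path_length l (rev p) = path_length l p"
proof (induction p)
  case (Cons a p)
  then show ?case
    by (cases "p = []") (simp_all add: path_length_snoc path_length_Cons last_rev insert_commute)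
qed (simp add: path_length_def)

lemma tree_dist_self: "is_tree X E \<Longrightarrow> tree_dist E l x x = 0"
  using tree_dist_eq_path_length[of X E "[x]" x x l] by (simp add: simple_path_iff_walk path_length_def)

lemma tree_dist_sym:
  assumes "is_tree X E" "x \<in> X" "y \<in> X"
  shows "tree_dist E l x y = tree_dist E l y x"
proof -
  have p: "simple_path E (tree_path E x y) x y" using assms by (rule simple_path_tree_path)
  then have "simple_path E (rev (tree_path E x y)) y x" by (rule simple_path_rev)
  then show ?thesis
    using tree_dist_eq_path_length[OF assms(1)] p by (simp add: path_length_rev)
qed

lemma tree_dist_Cons:
  assumes "is_tree X E" "{x, y} \<in> E" "simple_path E p y z" "x \<notin> set p"
  shows "tree_dist E l x z = l {x, y} + tree_dist E l y z"
proof -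
  have "p \<noteq> []" "hd p = y" using assms(3) unfolding simple_path_iff_walk by auto
  moreover from this have "simple_path E (x # p) x z"
    using assms unfolding simple_path_iff_walk by (cases p) (simp_all add: successively_Cons)
  ultimately show ?thesis
    using tree_dist_eq_path_length[OF assms(1)] assms(3) by (simp add: path_length_Cons)
qed

section \<open>Neighbours and leaves\<close>

definition neighbours :: "'a set set \<Rightarrow> 'a \<Rightarrow> 'a set" where
  "neighbours E x = {y. {x, y} \<in> E}"

lemma degree_eq_card_neighbours: "degree E x = card (neighbours E x)"
  unfolding degree_def neighbours_def ..

lemma edges_at_eq_image:
  assumes "simple_graph X E"
  shows "{e \<in> E. x \<in> e} = (\<lambda>y. {x, y}) ` neighbours E x"
proof
  show "{e \<in> E. x \<in> e} \<subseteq> (\<lambda>y. {x, y}) ` neighbours E x"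
  proof
    fix e assume e: "e \<in> {e \<in> E. x \<in> e}"
    then obtain u v where "e = {u, v}" using assms unfolding simple_graph_def by blast
    then have "e = {x, u} \<or> e = {x, v}" using e by (auto simp: insert_commute)
    then show "e \<in> (\<lambda>y. {x, y}) ` neighbours E x" using e unfolding neighbours_def by blast
  qed
qed (auto simp: neighbours_def)

lemma sum_edges_at:
  assumes g: "simple_graph X E"
  shows "(\<Sum>e\<in>{e \<in> E. x \<in> e}. f e) = (\<Sum>y\<in>neighbours E x. f {x, y})"
proof -
  have "inj_on (\<lambda>y. {x, y}) (neighbours E x)"
    using edge_in_graph(3)[OF g] unfolding neighbours_def inj_on_def by (auto simp: doubleton_eq_iff)
  then show ?thesis unfolding edges_at_eq_image[OF g] by (simp add: sum.reindex)
qed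

lemma walk_subset:
  assumes "simple_graph X E" "walk E p" "hd p \<in> X"
  shows "set p \<subseteq> X"
  using assms(2,3)
proof (induction p rule: induct_list012)
  case (3 a b p)
  then show ?case by (auto simp: successively_Cons dest: edge_in_graph(2)[OF assms(1)])
qed simp_all

lemma longest_walk_ends_in_leaf:
  assumes t: "is_tree X E"
    and p: "distinct (p @ [u, v])" "walk E (p @ [u, v])" "set (p @ [u, v]) \<subseteq> X"
    and longest:
      "\<And>q. distinct q \<Longrightarrow> walk E q \<Longrightarrow> set q \<subseteq> X \<Longrightarrow> length q \<le> length (p @ [u, v])"
  shows "neighbours E v = {u}"
proof -
  have uv: "{u, v} \<in> E" using p(2) by (simp add: successively_append_iff)
  have "w = u" if vw: "{v, w} \<in> E" for w
  proof (rule ccontr)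
    assume "w \<noteq> u"
    have "w \<in> X" "w \<noteq> v" using edge_in_graph[OF is_tree_simple_graph[OF t] vw] by auto
    show False
    proof (cases "w \<in> set p")
      case False
      then have "length (p @ [u, v, w]) \<le> length (p @ [u, v])"
        using longest[of "p @ [u, v, w]"] p vw \<open>w \<in> X\<close> \<open>w \<noteq> u\<close> \<open>w \<noteq> v\<close>
        by (auto simp: successively_append_iff)
      then show False by simp
    next
      case True
      then obtain a b where "p = a @ w # b" by (metis split_list)
      then have "simple_path E (w # b @ [u, v]) w v"
        using simple_path_split(2)[of E a w "b @ [u, v]"] p unfolding simple_path_iff_walk
        by (auto simp: successively_append_iff)
      moreover have "simple_path E [w, v] w v"
        using vw \<open>w \<noteq> v\<close> unfolding simple_path_iff_walk by (simp add: insert_commute)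
      ultimately show False using tree_simple_path_unique[OF t] by fastforce
    qed
  qed
  then show ?thesis using uv unfolding neighbours_def by (auto simp: insert_commute)
qed

lemma tree_has_leaf:
  assumes t: "is_tree X E" and "a \<in> X" "b \<in> X" "a \<noteq> b"
  obtains v u where "v \<in> X" "neighbours E v = {u}"
proof -
  let ?P = "\<lambda>q. distinct q \<and> walk E q \<and> set q \<subseteq> X"
  obtain p0 where p0: "simple_path E p0 a b" using assms unfolding is_tree_def by blast
  have "?P p0" using p0 walk_subset[OF is_tree_simple_graph[OF t]] assms(2)
    unfolding simple_path_iff_walk by blast
  moreover have "length q < Suc (card X)" if "?P q" for q
    using that card_mono[OF is_tree_finite[OF t], of "set q"] distinct_card[of q] by simp
  ultimately obtain q where q: "?P q" and longest: "\<And>q'. ?P q' \<Longrightarrow> length q' \<le> length q"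
    using Lattices_Big.ex_has_greatest_nat[of ?P p0 length] by blast
  have "2 \<le> length p0" using p0 assms(4) simple_path_distinct_ends by fastforce
  then have "2 \<le> length q" using longest[OF \<open>?P p0\<close>] by simp
  then obtain r u v where "rev q = v # u # r" by (metis One_nat_def Suc_1 Suc_le_length_iff length_rev)
  then have qr: "q = rev r @ [u, v]" by (metis rev_rev_ident rev.simps append.simps rev_append)
  have "neighbours E v = {u}"
    using longest_walk_ends_in_leaf[OF t, of "rev r" u v] q longest unfolding qr by blast
  moreover have "v \<in> X" using q qr by auto
  ultimately show thesis using that by blast
qed

lemma leaf_not_in_simple_path:
  assumes leaf: "neighbours E v = {u}" and p: "simple_path E p a b" and "a \<noteq> v" "b \<noteq> v"
  shows "v \<notin> set p"
proof
  assume "v \<in> set p"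
  then obtain p1 p2 where p12: "p = p1 @ v # p2" by (metis split_list)
  then have "p1 \<noteq> []" "p2 \<noteq> []" using p assms(3,4) unfolding simple_path_iff_walk by auto
  moreover have "walk E (p1 @ v # p2)" "distinct (p1 @ v # p2)"
    using p p12 unfolding simple_path_iff_walk by auto
  ultimately have "last p1 \<in> neighbours E v" "hd p2 \<in> neighbours E v" "last p1 \<noteq> hd p2"
    unfolding neighbours_def
    by (auto simp: successively_append_iff successively_Cons insert_commute dest: last_in_set hd_in_set)
  then show False using leaf by simp
qed

definition edges_avoiding :: "'a set set \<Rightarrow> 'a \<Rightarrow> 'a set set" where
  "edges_avoiding E v = {e \<in> E. v \<notin> e}"

lemma simple_path_edges_avoiding:
  "simple_path E p a b \<Longrightarrow> v \<notin> set p \<Longrightarrow> simple_path (edges_avoiding E v) p a b"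
  unfolding simple_path_def edges_avoiding_def by (auto dest: nth_mem)

lemma is_cycle_mono: "is_cycle E c \<Longrightarrow> E \<subseteq> E' \<Longrightarrow> is_cycle E' c"
  unfolding is_cycle_def by blast

lemma is_tree_remove_leaf:
  assumes t: "is_tree X E" and leaf: "neighbours E v = {u}"
  shows "is_tree (X - {v}) (edges_avoiding E v)"
proof -
  have "{v, u} \<in> E" using leaf unfolding neighbours_def by blast
  then have "u \<in> X - {v}" using edge_in_graph[OF is_tree_simple_graph[OF t]] by blast
  moreover have "simple_graph (X - {v}) (edges_avoiding E v)"
    using is_tree_simple_graph[OF t] unfolding simple_graph_def edges_avoiding_def by blast
  moreover have "\<exists>p. simple_path (edges_avoiding E v) p a b" if "a \<in> X - {v}" "b \<in> X - {v}" for a b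
  proof -
    have p: "simple_path E (tree_path E a b) a b" using simple_path_tree_path[OF t] that by blast
    then have "v \<notin> set (tree_path E a b)" using leaf_not_in_simple_path[OF leaf] that by blast
    then show ?thesis using simple_path_edges_avoiding[OF p] by blast
  qed
  moreover have "\<nexists>c. is_cycle (edges_avoiding E v) c"
    using t is_cycle_mono[of _ _ E] unfolding is_tree_def edges_avoiding_def by blast
  ultimately show ?thesis unfolding is_tree_def by blast
qed

lemma tree_dist_remove_leaf:
  assumes t: "is_tree X E" and leaf: "neighbours E v = {u}" and "a \<in> X - {v}" "b \<in> X - {v}"
  shows "tree_dist (edges_avoiding E v) l a b = tree_dist E l a b"
proof -
  define p where "p = tree_path E a b"
  have p: "simple_path E p a b" using simple_path_tree_path[OF t] assms(3,4) unfolding p_def by blast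
  moreover have "v \<notin> set p" using leaf_not_in_simple_path[OF leaf p] assms(3,4) by blast
  ultimately have "simple_path (edges_avoiding E v) p a b" by (rule simple_path_edges_avoiding)
  then show ?thesis
    using tree_dist_eq_path_length[OF is_tree_remove_leaf[OF t leaf]] tree_dist_eq_path_length[OF t p]
    by simp
qed

lemma tree_dist_from_leaf:
  assumes t: "is_tree X E" and leaf: "neighbours E v = {u}" and z: "z \<in> X - {v}"
  shows "tree_dist E l v z = l {v, u} + tree_dist E l u z"
proof -
  have vu: "{v, u} \<in> E" using leaf unfolding neighbours_def by blast
  then have "u \<in> X" "u \<noteq> v" using edge_in_graph[OF is_tree_simple_graph[OF t] vu] by auto
  then have p: "simple_path E (tree_path E u z) u z" using simple_path_tree_path[OF t] z by blast
  then show ?thesis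
    using tree_dist_Cons[OF t vu p] leaf_not_in_simple_path[OF leaf p] \<open>u \<noteq> v\<close> z by blast
qed

section \<open>Positive definiteness of the similarity matrix\<close>

definition quad_form :: "'a set \<Rightarrow> ('a \<Rightarrow> 'a \<Rightarrow> real) \<Rightarrow> ('a \<Rightarrow> real) \<Rightarrow> real" where
  "quad_form S Z w = (\<Sum>a\<in>S. \<Sum>b\<in>S. Z a b * w a * w b)"

definition similarity :: "'a set set \<Rightarrow> ('a set \<Rightarrow> real) \<Rightarrow> 'a \<Rightarrow> 'a \<Rightarrow> real" where
  "similarity E l a b = exp (- tree_dist E l a b)"

lemma similarity_form_eq_quad_form: "similarity_form X E l \<mu> = quad_form X (similarity E l) \<mu>"
  unfolding similarity_form_def quad_form_def similarity_def ..

lemma similarity_self: "is_tree X E \<Longrightarrow> similarity E l x x = 1"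
  unfolding similarity_def by (simp add: tree_dist_self)

lemma similarity_sym:
  "is_tree X E \<Longrightarrow> x \<in> X \<Longrightarrow> y \<in> X \<Longrightarrow> similarity E l x y = similarity E l y x"
  unfolding similarity_def by (simp add: tree_dist_sym)

lemma quad_form_zero: "(\<And>a. a \<in> S \<Longrightarrow> w a = 0) \<Longrightarrow> quad_form S Z w = 0"
  unfolding quad_form_def by simp

lemma quad_form_add:
  assumes sym: "\<And>a b. a \<in> S \<Longrightarrow> b \<in> S \<Longrightarrow> Z a b = Z b a"
  shows "quad_form S Z (\<lambda>a. f a + g a)
    = quad_form S Z f + 2 * (\<Sum>a\<in>S. \<Sum>b\<in>S. Z a b * f a * g b) + quad_form S Z g"
proof -
  have "(\<Sum>a\<in>S. \<Sum>b\<in>S. Z a b * g a * f b) = (\<Sum>b\<in>S. \<Sum>a\<in>S. Z a b * g a * f b)"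
    by (rule sum.swap)
  also have "\<dots> = (\<Sum>a\<in>S. \<Sum>b\<in>S. Z a b * f a * g b)"
    using sym by (intro sum.cong refl) (simp add: mult_ac)
  finally have "(\<Sum>a\<in>S. \<Sum>b\<in>S. Z a b * g a * f b) = (\<Sum>a\<in>S. \<Sum>b\<in>S. Z a b * f a * g b)" .
  moreover have "quad_form S Z (\<lambda>a. f a + g a) = quad_form S Z f + (\<Sum>a\<in>S. \<Sum>b\<in>S. Z a b * f a * g b)
      + (\<Sum>a\<in>S. \<Sum>b\<in>S. Z a b * g a * f b) + quad_form S Z g"
    unfolding quad_form_def by (simp add: algebra_simps sum.distrib)
  ultimately show ?thesis by simp
qed

lemma quad_form_add_point:
  assumes "finite S" "u \<in> S" and sym: "\<And>a b. a \<in> S \<Longrightarrow> b \<in> S \<Longrightarrow> Z a b = Z b a"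
  shows "quad_form S Z (\<lambda>a. w a + (if a = u then c else 0))
    = quad_form S Z w + 2 * c * (\<Sum>b\<in>S. Z u b * w b) + c\<^sup>2 * Z u u"
proof -
  have "(\<Sum>a\<in>S. \<Sum>b\<in>S. Z a b * w a * (if b = u then c else 0)) = c * (\<Sum>b\<in>S. Z u b * w b)"
    using assms by (simp add: if_distrib sum_distrib_left mult_ac cong: if_cong)
  moreover have "quad_form S Z (\<lambda>a. if a = u then c else 0)
      = (\<Sum>a\<in>S. if a = u then (\<Sum>b\<in>S. if b = u then c\<^sup>2 * Z u u else 0) else 0)"
    unfolding quad_form_def by (intro sum.cong refl) (auto simp: power2_eq_square intro: sum.cong)
  then have "quad_form S Z (\<lambda>a. if a = u then c else 0) = c\<^sup>2 * Z u u"
    using assms(1,2) by simp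
  ultimately show ?thesis using quad_form_add[of S Z w "\<lambda>a. if a = u then c else 0", OF sym] by simp
qed

lemma quad_form_insert:
  assumes "finite S" "v \<notin> S"
    and sym: "\<And>a b. a \<in> insert v S \<Longrightarrow> b \<in> insert v S \<Longrightarrow> Z a b = Z b a"
  shows "quad_form (insert v S) Z w = quad_form S Z w + 2 * w v * (\<Sum>b\<in>S. Z v b * w b) + Z v v * (w v)\<^sup>2"
proof -
  have "(\<Sum>a\<in>S. Z a v * w a * w v) = w v * (\<Sum>b\<in>S. Z v b * w b)"
    using sym by (simp add: sum_distrib_left mult_ac)
  then show ?thesis
    using assms(1,2) unfolding quad_form_def
    by (simp add: sum.distrib sum_distrib_left power2_eq_square algebra_simps)
qed

lemma quad_form_remove_leaf:
  assumes t: "is_tree X E" and v: "v \<in> X" and leaf: "neighbours E v = {u}"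
    and q: "q = exp (- l {v, u})"
  shows "quad_form X (similarity E l) w
    = quad_form (X - {v}) (similarity (edges_avoiding E v) l) (\<lambda>a. w a + (if a = u then q * w v else 0))
      + (1 - q\<^sup>2) * (w v)\<^sup>2"
proof -
  let ?Z = "similarity E l" and ?X' = "X - {v}"
  have "{v, u} \<in> E" using leaf unfolding neighbours_def by blast
  then have u: "u \<in> ?X'" using edge_in_graph[OF is_tree_simple_graph[OF t]] by blast
  have fin: "finite ?X'" using is_tree_finite[OF t] by simp
  have sym: "?Z a b = ?Z b a" if "a \<in> X" "b \<in> X" for a b using similarity_sym[OF t that] .
  have restrict: "quad_form ?X' (similarity (edges_avoiding E v) l) w' = quad_form ?X' ?Z w'" for w'
    unfolding quad_form_def similarity_def using tree_dist_remove_leaf[OF t leaf] by simp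
  have shift: "quad_form ?X' ?Z (\<lambda>a. w a + (if a = u then q * w v else 0))
      = quad_form ?X' ?Z w + 2 * (q * w v) * (\<Sum>b\<in>?X'. ?Z u b * w b) + (q * w v)\<^sup>2"
    using quad_form_add_point[OF fin u, of ?Z] sym similarity_self[OF t] by (simp add: power_mult_distrib)
  have whole: "quad_form X ?Z w = quad_form ?X' ?Z w + 2 * w v * (\<Sum>b\<in>?X'. ?Z v b * w b) + (w v)\<^sup>2"
    using quad_form_insert[OF fin, of v ?Z w] sym similarity_self[OF t] v by (simp add: insert_absorb)
  have "?Z v b = q * ?Z u b" if "b \<in> ?X'" for b
    unfolding similarity_def q using tree_dist_from_leaf[OF t leaf that] by (simp add: exp_add[symmetric])
  then have row: "(\<Sum>b\<in>?X'. ?Z v b * w b) = q * (\<Sum>b\<in>?X'. ?Z u b * w b)"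
    by (simp add: sum_distrib_left mult.assoc)
  show ?thesis unfolding restrict shift whole row by (simp add: algebra_simps power2_eq_square)
qed

theorem quad_form_similarity_pos:
  assumes "is_tree X E" "\<forall>e\<in>E. 0 < l e" "\<exists>a\<in>X. w a \<noteq> 0"
  shows "0 < quad_form X (similarity E l) w"
  using assms
proof (induction "card X" arbitrary: X E w rule: less_induct)
  case less
  note t = less.prems(1) and lpos = less.prems(2) and nz = less.prems(3)
  show ?case
  proof (cases "\<exists>a. X = {a}")
    case True
    then obtain a where "X = {a}" by blast
    then show ?thesis
      using nz similarity_self[OF t] unfolding quad_form_def by (auto simp: zero_less_mult_iff linorder_neq_iff)
  next
    case False
    then obtain a b where "a \<in> X" "b \<in> X" "a \<noteq> b" using nz by blast
    then obtain v u where v: "v \<in> X" and leaf: "neighbours E v = {u}"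
      using tree_has_leaf[OF t] by metis
    define q where "q = exp (- l {v, u})"
    define w' where "w' a = w a + (if a = u then q * w v else 0)" for a
    let ?X' = "X - {v}" and ?E' = "edges_avoiding E v"
    have t': "is_tree ?X' ?E'" by (rule is_tree_remove_leaf[OF t leaf])
    have lpos': "\<forall>e\<in>?E'. 0 < l e" using lpos unfolding edges_avoiding_def by simp
    have card: "card ?X' < card X" using is_tree_finite[OF t] v by (rule card_Diff1_less)
    have IH: "0 < quad_form ?X' (similarity ?E' l) w'" if "\<exists>a\<in>?X'. w' a \<noteq> 0"
      using less.hyps[OF card t' lpos' that] .
    have "0 \<le> quad_form ?X' (similarity ?E' l) w'"
      using IH quad_form_zero[of ?X' w'] by (cases "\<exists>a\<in>?X'. w' a \<noteq> 0") auto
    moreover have "0 < l {v, u}" using lpos leaf unfolding neighbours_def by blast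
    then have "0 < 1 - q\<^sup>2" unfolding q_def by (simp add: power_less_one_iff)
    moreover have "0 < quad_form ?X' (similarity ?E' l) w'" if "w v = 0"
    proof -
      have "w' = w" using that unfolding w'_def by auto
      then show ?thesis using IH nz that by (metis DiffI singletonD)
    qed
    ultimately show ?thesis
      using quad_form_remove_leaf[OF t v leaf, of q l w] q_def unfolding w'_def[symmetric]
      by (cases "w v = 0") (auto intro: add_nonneg_pos)
  qed
qed

section \<open>Minimising a quadratic form over probability measures\<close>

lemma prob_on_le_one: "prob_on X \<mu> \<Longrightarrow> finite X \<Longrightarrow> \<mu> x \<le> 1"
  unfolding prob_on_def using member_le_sum[of x X \<mu>] by (cases "x \<in> X") auto

lemma compact_prob_on: "finite X \<Longrightarrow> compact {\<mu> :: 'a \<Rightarrow> real. prob_on X \<mu>}"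
proof -
  assume fin: "finite X"
  define K where "K x = (if x \<in> X then {0..1} else {0 :: real})" for x
  have "compactin (product_topology (\<lambda>_. euclidean) UNIV) (PiE UNIV K)"
    unfolding compactin_PiE by (auto simp: K_def)
  then have "compact (PiE UNIV K)" by (simp add: euclidean_product_topology)
  moreover have "closed {\<mu> :: 'a \<Rightarrow> real. (\<Sum>x\<in>X. \<mu> x) = 1}"
    by (intro closed_Collect_eq continuous_intros continuous_on_product_coordinates)
  moreover have "{\<mu>. prob_on X \<mu>} = PiE UNIV K \<inter> {\<mu>. (\<Sum>x\<in>X. \<mu> x) = 1}"
    using prob_on_le_one[OF _ fin] unfolding prob_on_def K_def by (auto simp: PiE_iff split: if_splits)
  ultimately show ?thesis by (simp add: compact_Int_closed)
qed

lemma quad_form_has_min_on_prob: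
  assumes "finite X" "X \<noteq> {}"
  obtains \<mu> where "prob_on X \<mu>" "\<And>\<nu>. prob_on X \<nu> \<Longrightarrow> quad_form X Z \<mu> \<le> quad_form X Z \<nu>"
proof -
  obtain a where "a \<in> X" using assms(2) by blast
  then have "prob_on X (\<lambda>x. if x = a then 1 else 0)" unfolding prob_on_def using assms(1) by simp
  moreover have "continuous_on {\<mu>. prob_on X \<mu>} (quad_form X Z)"
    unfolding quad_form_def
    by (intro continuous_intros continuous_on_subset[OF continuous_on_product_coordinates]) simp_all
  ultimately show thesis
    using continuous_attains_inf[OF compact_prob_on[OF assms(1)]] that by blast
qed

lemma quad_form_midpoint:
  "quad_form S Z (\<lambda>a. (\<mu> a + \<nu> a) / 2)
    = (quad_form S Z \<mu> + quad_form S Z \<nu>) / 2 - quad_form S Z (\<lambda>a. \<mu> a - \<nu> a) / 4"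
proof -
  have "quad_form S Z (\<lambda>a. (\<mu> a + \<nu> a) / 2) = (\<Sum>a\<in>S. \<Sum>b\<in>S.
      (Z a b * \<mu> a * \<mu> b + Z a b * \<nu> a * \<nu> b) / 2 - Z a b * (\<mu> a - \<nu> a) * (\<mu> b - \<nu> b) / 4)"
    unfolding quad_form_def by (intro sum.cong refl) (simp add: field_simps)
  then show ?thesis
    unfolding quad_form_def by (simp only: sum_subtractf sum_divide_distrib[symmetric] sum.distrib)
qed

lemma prob_on_midpoint: "prob_on X \<mu> \<Longrightarrow> prob_on X \<nu> \<Longrightarrow> prob_on X (\<lambda>a. (\<mu> a + \<nu> a) / 2)"
  unfolding prob_on_def by (simp add: sum.distrib sum_divide_distrib[symmetric])

lemma quad_form_min_on_prob_unique:
  assumes pos: "\<And>w. \<exists>a\<in>X. w a \<noteq> 0 \<Longrightarrow> 0 < quad_form X Z w"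
    and \<mu>: "prob_on X \<mu>" "\<And>\<rho>. prob_on X \<rho> \<Longrightarrow> quad_form X Z \<mu> \<le> quad_form X Z \<rho>"
    and \<nu>: "prob_on X \<nu>" "\<And>\<rho>. prob_on X \<rho> \<Longrightarrow> quad_form X Z \<nu> \<le> quad_form X Z \<rho>"
  shows "\<mu> = \<nu>"
proof (rule ccontr)
  assume "\<mu> \<noteq> \<nu>"
  then obtain a where "\<mu> a \<noteq> \<nu> a" by blast
  moreover have "\<mu> a = \<nu> a" if "a \<notin> X" using \<mu>(1) \<nu>(1) that unfolding prob_on_def by simp
  ultimately have "\<exists>a\<in>X. \<mu> a - \<nu> a \<noteq> 0" by auto
  then have "0 < quad_form X Z (\<lambda>a. \<mu> a - \<nu> a)" by (rule pos)
  moreover have "quad_form X Z \<mu> = quad_form X Z \<nu>" using \<mu> \<nu> by (simp add: order_antisym)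
  moreover have "quad_form X Z \<mu> \<le> quad_form X Z (\<lambda>a. (\<mu> a + \<nu> a) / 2)"
    using \<mu>(2) prob_on_midpoint[OF \<mu>(1) \<nu>(1)] .
  ultimately show False by (simp add: quad_form_midpoint)
qed

lemma maxdiv_measure_minimises:
  assumes "weighted_tree X E l"
  shows "prob_on X (maxdiv_measure X E l)"
    and "prob_on X \<nu> \<Longrightarrow> quad_form X (similarity E l) (maxdiv_measure X E l) \<le> quad_form X (similarity E l) \<nu>"
proof -
  have t: "is_tree X E" and lpos: "\<forall>e\<in>E. 0 < l e" using assms unfolding weighted_tree_def by auto
  have "X \<noteq> {}" using t unfolding is_tree_def by blast
  then obtain \<mu> where "prob_on X \<mu>"
    "\<And>\<nu>. prob_on X \<nu> \<Longrightarrow> quad_form X (similarity E l) \<mu> \<le> quad_form X (similarity E l) \<nu>"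
    using quad_form_has_min_on_prob[OF is_tree_finite[OF t]] by metis
  then have "\<exists>!\<mu>. prob_on X \<mu> \<and>
      (\<forall>\<nu>. prob_on X \<nu> \<longrightarrow> similarity_form X E l \<mu> \<le> similarity_form X E l \<nu>)"
    using quad_form_min_on_prob_unique[OF quad_form_similarity_pos[OF t lpos]]
    unfolding similarity_form_eq_quad_form by blast
  then have "prob_on X (maxdiv_measure X E l) \<and> (\<forall>\<nu>. prob_on X \<nu> \<longrightarrow>
      similarity_form X E l (maxdiv_measure X E l) \<le> similarity_form X E l \<nu>)"
    unfolding maxdiv_measure_def by (rule theI')
  then show "prob_on X (maxdiv_measure X E l)"
    and "prob_on X \<nu> \<Longrightarrow> quad_form X (similarity E l) (maxdiv_measure X E l) \<le> quad_form X (similarity E l) \<nu>"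
    unfolding similarity_form_eq_quad_form by blast+
qed

lemma nonneg_if_affine_nonneg_at_right:
  fixes D C \<delta> :: real
  assumes "0 < \<delta>" "\<And>e. 0 < e \<Longrightarrow> e \<le> \<delta> \<Longrightarrow> 0 \<le> D + e * C"
  shows "0 \<le> D"
proof -
  have "((\<lambda>e. D + e * C) \<longlongrightarrow> D) (at_right 0)"
    by (auto intro!: tendsto_eq_intros)
  moreover have "eventually (\<lambda>e. 0 \<le> D + e * C) (at_right 0)"
    unfolding eventually_at_right_field using assms by (auto intro!: exI[of _ \<delta>])
  ultimately show ?thesis by (rule tendsto_lowerbound) simp
qed

definition potential :: "'a set \<Rightarrow> ('a \<Rightarrow> 'a \<Rightarrow> real) \<Rightarrow> ('a \<Rightarrow> real) \<Rightarrow> 'a \<Rightarrow> real" where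
  "potential X Z \<mu> z = (\<Sum>b\<in>X. Z z b * \<mu> b)"

lemma quad_form_min_potential_le:
  assumes fin: "finite X" and sym: "\<And>a b. a \<in> X \<Longrightarrow> b \<in> X \<Longrightarrow> Z a b = Z b a"
    and \<mu>: "prob_on X \<mu>" "\<And>\<nu>. prob_on X \<nu> \<Longrightarrow> quad_form X Z \<mu> \<le> quad_form X Z \<nu>"
    and x: "x \<in> X" "0 < \<mu> x" and y: "y \<in> X"
  shows "potential X Z \<mu> x \<le> potential X Z \<mu> y"
proof -
  define h where "h a = (if a = y then 1 else 0) - (if a = x then 1 else 0 :: real)" for a
  define D where "D = potential X Z \<mu> y - potential X Z \<mu> x"
  have sum_h: "(\<Sum>a\<in>X. h a * G a) = G y - G x" for G :: "'a \<Rightarrow> real"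
  proof -
    have "(\<Sum>a\<in>X. h a * G a) = (\<Sum>a\<in>X. if a = y then G a else 0) - (\<Sum>a\<in>X. if a = x then G a else 0)"
      unfolding h_def sum_subtractf[symmetric] by (intro sum.cong) auto
    then show ?thesis using fin x y by simp
  qed
  have "0 \<le> 2 * D + e * quad_form X Z h" if e: "0 < e" "e \<le> \<mu> x" for e
  proof -
    have "prob_on X (\<lambda>a. \<mu> a + e * h a)"
      using \<mu>(1) e sum_h[of "\<lambda>_. 1"] unfolding prob_on_def h_def
      by (auto simp: sum.distrib sum_distrib_left[symmetric] x y)
    then have "quad_form X Z \<mu> \<le> quad_form X Z (\<lambda>a. \<mu> a + e * h a)" by (rule \<mu>(2))
    moreover have "(\<Sum>a\<in>X. \<Sum>b\<in>X. Z a b * \<mu> a * (e * h b)) = e * (\<Sum>b\<in>X. h b * potential X Z \<mu> b)"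
      unfolding potential_def sum_distrib_left
      by (subst sum.swap) (auto intro!: sum.cong simp: sym mult_ac)
    moreover have "quad_form X Z (\<lambda>a. e * h a) = e\<^sup>2 * quad_form X Z h"
      unfolding quad_form_def sum_distrib_left by (simp add: power2_eq_square mult_ac)
    ultimately have "0 \<le> e * (2 * D + e * quad_form X Z h)"
      using quad_form_add[of X Z \<mu> "\<lambda>a. e * h a", OF sym] sum_h unfolding D_def
      by (simp add: algebra_simps power2_eq_square)
    then show ?thesis using e(1) by (simp add: zero_le_mult_iff)
  qed
  then have "0 \<le> 2 * D" using nonneg_if_affine_nonneg_at_right[OF x(2)] by blast
  then show ?thesis unfolding D_def by simp
qed

section \<open>Branches at a vertex\<close>

definition first_step :: "'a set set \<Rightarrow> 'a \<Rightarrow> 'a \<Rightarrow> 'a" where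
  "first_step E x z = tree_path E x z ! 1"

definition branch :: "'a set \<Rightarrow> 'a set set \<Rightarrow> 'a \<Rightarrow> 'a \<Rightarrow> 'a set" where
  "branch X E x y = {z \<in> X - {x}. first_step E x z = y}"

lemma tree_path_first_step:
  assumes t: "is_tree X E" and "x \<in> X" "z \<in> X" "z \<noteq> x"
  obtains r where "tree_path E x z = x # r" "simple_path E r (first_step E x z) z"
proof -
  have p: "simple_path E (tree_path E x z) x z" using simple_path_tree_path[OF t] assms(2,3) .
  then obtain m where m: "tree_path E x z = x # m @ [z]" using simple_path_distinct_ends assms(4) by metis
  moreover obtain y s where "m @ [z] = y # s" by (cases "m @ [z]") auto
  ultimately have path: "tree_path E x z = [x] @ y # s" and "first_step E x z = y"
    unfolding first_step_def by simp_all
  moreover have "simple_path E (y # s) y z" using simple_path_split(2)[OF p[unfolded path]] .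
  ultimately show thesis using that[of "y # s"] by simp
qed

lemma first_step_neighbour:
  assumes t: "is_tree X E" and "x \<in> X" "z \<in> X" "z \<noteq> x"
  shows "first_step E x z \<in> neighbours E x"
proof -
  obtain r where r: "tree_path E x z = x # r" "simple_path E r (first_step E x z) z"
    using tree_path_first_step[OF assms] .
  moreover have "walk E (tree_path E x z)"
    using simple_path_tree_path[OF t assms(2,3)] unfolding simple_path_iff_walk by blast
  ultimately show ?thesis unfolding neighbours_def simple_path_iff_walk by (auto simp: successively_Cons)
qed

lemma tree_dist_first_step:
  assumes t: "is_tree X E" and "x \<in> X" "z \<in> X" "z \<noteq> x"
  shows "tree_dist E l x z = l {x, first_step E x z} + tree_dist E l (first_step E x z) z"
proof -
  obtain r where r: "tree_path E x z = x # r" "simple_path E r (first_step E x z) z"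
    using tree_path_first_step[OF assms] .
  moreover have "distinct (tree_path E x z)"
    using simple_path_tree_path[OF t assms(2,3)] unfolding simple_path_iff_walk by blast
  ultimately show ?thesis
    using tree_dist_Cons[OF t _ r(2)] first_step_neighbour[OF assms] unfolding neighbours_def by simp
qed

lemma tree_dist_outside_branch:
  assumes t: "is_tree X E" and x: "x \<in> X" and y: "y \<in> neighbours E x"
    and z: "z \<in> X" "z \<notin> branch X E x y"
  shows "tree_dist E l y z = l {x, y} + tree_dist E l x z"
proof -
  let ?p = "tree_path E x z"
  have xy: "{x, y} \<in> E" using y unfolding neighbours_def by simp
  have p: "simple_path E ?p x z" using simple_path_tree_path[OF t x z(1)] .
  have "y \<notin> set ?p"
  proof
    assume "y \<in> set ?p"
    then obtain p1 p2 where p12: "?p = p1 @ y # p2" by (metis split_list)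
    moreover have "simple_path E [x, y] x y"
      using xy edge_in_graph[OF is_tree_simple_graph[OF t] xy] unfolding simple_path_iff_walk by simp
    ultimately have "p1 @ [y] = [x, y]"
      using tree_simple_path_unique[OF t] simple_path_split(1)[OF p[unfolded p12]] by blast
    then have "?p = x # y # p2" using p12 by simp
    moreover have "z \<noteq> x" using p calculation simple_path_same_ends by fastforce
    ultimately have "z \<in> branch X E x y" using z(1) unfolding branch_def first_step_def by simp
    then show False using z(2) by blast
  qed
  then show ?thesis
    using tree_dist_Cons[OF t _ p, of y l] xy by (simp add: insert_commute)
qed

lemma potential_eq_sum_branches:
  assumes t: "is_tree X E" and x: "x \<in> X"
  shows "potential X Z \<mu> x = Z x x * \<mu> x + (\<Sum>y\<in>neighbours E x. \<Sum>b\<in>branch X E x y. Z x b * \<mu> b)"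
proof -
  have fin: "finite X" by (rule is_tree_finite[OF t])
  have "neighbours E x \<subseteq> X"
    using edge_in_graph[OF is_tree_simple_graph[OF t]] unfolding neighbours_def by blast
  then have "(\<Sum>y\<in>neighbours E x. \<Sum>b\<in>branch X E x y. Z x b * \<mu> b) = (\<Sum>b\<in>X - {x}. Z x b * \<mu> b)"
    unfolding branch_def
    using sum.group[of "X - {x}" "neighbours E x" "first_step E x"] first_step_neighbour[OF t x] fin
    by (auto intro: finite_subset)
  then show ?thesis unfolding potential_def using sum.remove[OF fin x] by simp
qed

lemma two_branch_bound:
  fixes q R A :: real
  assumes "0 < q" "q < 1" "R + q * A \<le> q * R + A"
  shows "(R + q * A) * (q / (1 + q)) \<le> q * A"
proof -
  have "(1 - q) * R \<le> (1 - q) * A" using assms(3) by (simp add: algebra_simps)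
  then have "R \<le> A" using assms(2) by simp
  then have "(R + q * A) * q \<le> q * A * (1 + q)" using assms(1) by (simp add: algebra_simps)
  then show ?thesis using assms(1) by (simp add: field_simps)
qed

lemma potential_branch_ge:
  assumes wt: "weighted_tree X E l" and x: "x \<in> X" and y: "y \<in> neighbours E x"
    and le: "potential X (similarity E l) \<mu> x \<le> potential X (similarity E l) \<mu> y"
  defines "q \<equiv> exp (- l {x, y})"
  shows "potential X (similarity E l) \<mu> x * (q / (1 + q))
    \<le> (\<Sum>b\<in>branch X E x y. similarity E l x b * \<mu> b)"
proof -
  let ?Z = "similarity E l" and ?B = "branch X E x y"
  have t: "is_tree X E" using wt unfolding weighted_tree_def by blast
  have "0 < l {x, y}" using wt y unfolding weighted_tree_def neighbours_def by blast
  then have q: "0 < q" "q < 1" unfolding q_def by auto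
  have fin: "finite X" and B: "?B \<subseteq> X" using is_tree_finite[OF t] unfolding branch_def by auto
  define A where "A = (\<Sum>b\<in>?B. ?Z y b * \<mu> b)"
  define R where "R = (\<Sum>b\<in>X - ?B. ?Z x b * \<mu> b)"
  have A: "(\<Sum>b\<in>?B. ?Z x b * \<mu> b) = q * A"
    unfolding A_def sum_distrib_left
  proof (intro sum.cong refl)
    fix b assume "b \<in> ?B"
    then have "tree_dist E l x b = l {x, y} + tree_dist E l y b"
      using tree_dist_first_step[OF t x] unfolding branch_def by auto
    then show "?Z x b * \<mu> b = q * (?Z y b * \<mu> b)"
      unfolding similarity_def q_def by (simp add: exp_add[symmetric])
  qed
  have R: "(\<Sum>b\<in>X - ?B. ?Z y b * \<mu> b) = q * R"
    unfolding R_def sum_distrib_left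
  proof (intro sum.cong refl)
    fix b assume "b \<in> X - ?B"
    then have "tree_dist E l y b = l {x, y} + tree_dist E l x b"
      using tree_dist_outside_branch[OF t x y] by blast
    then show "?Z y b * \<mu> b = q * (?Z x b * \<mu> b)"
      unfolding similarity_def q_def by (simp add: exp_add[symmetric])
  qed
  have "potential X ?Z \<mu> x = R + q * A" "potential X ?Z \<mu> y = q * R + A"
    unfolding potential_def sum.subset_diff[OF B fin] A R by (simp_all add: R_def A_def)
  then show ?thesis using two_branch_bound[OF q] le A by simp
qed

theorem notin_support_maxdiv_measure:
  assumes wt: "weighted_tree X E l" and x: "x \<in> X"
    and deg: "(\<Sum>y\<in>neighbours E x. 1 / (1 + exp (- l {x, y}))) \<le> real (card (neighbours E x)) - 1"
  shows "x \<notin> support X (maxdiv_measure X E l)"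
proof
  assume "x \<in> support X (maxdiv_measure X E l)"
  define \<mu> where "\<mu> = maxdiv_measure X E l"
  let ?Z = "similarity E l" and ?N = "neighbours E x"
  define F where "F = potential X ?Z \<mu> x"
  define q where "q y = exp (- l {x, y})" for y
  have t: "is_tree X E" using wt unfolding weighted_tree_def by blast
  have \<mu>x: "0 < \<mu> x" using \<open>x \<in> support X _\<close> unfolding support_def \<mu>_def by simp
  have \<mu>: "prob_on X \<mu>" "\<And>\<nu>. prob_on X \<nu> \<Longrightarrow> quad_form X ?Z \<mu> \<le> quad_form X ?Z \<nu>"
    unfolding \<mu>_def by (rule maxdiv_measure_minimises[OF wt])+
  have "F \<le> potential X ?Z \<mu> y" if "y \<in> X" for y
    unfolding F_def
    using quad_form_min_potential_le[OF is_tree_finite[OF t] similarity_sym[OF t] \<mu> x \<mu>x that] .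
  then have "F * (q y / (1 + q y)) \<le> (\<Sum>b\<in>branch X E x y. ?Z x b * \<mu> b)" if "y \<in> ?N" for y
    using potential_branch_ge[OF wt x that] edge_in_graph[OF is_tree_simple_graph[OF t]] that
    unfolding F_def q_def neighbours_def by blast
  then have "F * (\<Sum>y\<in>?N. q y / (1 + q y)) \<le> (\<Sum>y\<in>?N. \<Sum>b\<in>branch X E x y. ?Z x b * \<mu> b)"
    unfolding sum_distrib_left by (rule sum_mono)
  also have "\<dots> = F - \<mu> x"
    using potential_eq_sum_branches[OF t x] similarity_self[OF t] unfolding F_def by simp
  finally have "F * (\<Sum>y\<in>?N. q y / (1 + q y)) \<le> F - \<mu> x" .
  moreover have "q y / (1 + q y) = 1 - 1 / (1 + q y)" for y
  proof -
    have "0 < 1 + q y" unfolding q_def by (simp add: add_pos_pos)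
    then show ?thesis by (simp add: divide_simps)
  qed
  then have "1 \<le> (\<Sum>y\<in>?N. q y / (1 + q y))"
    using deg unfolding q_def by (simp add: sum_subtractf)
  moreover have "0 \<le> F"
    unfolding F_def potential_def similarity_def using \<mu>(1) unfolding prob_on_def by (simp add: sum_nonneg)
  ultimately have "F \<le> F - \<mu> x" by (metis mult_left_mono mult.right_neutral order_trans)
  then show False using \<mu>x by simp
qed

lemma sum_logistic_le_card_minus_one:
  fixes f :: "'b \<Rightarrow> real"
  assumes "\<And>y. y \<in> N \<Longrightarrow> f y \<le> ln 2" "3 \<le> card N"
  shows "(\<Sum>y\<in>N. 1 / (1 + exp (- f y))) \<le> real (card N) - 1"
proof -
  have term_le: "1 / (1 + exp (- f y)) \<le> 2 / 3" if "y \<in> N" for y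
  proof -
    have "exp (- ln 2) \<le> exp (- f y)" using assms(1)[OF that] by simp
    then have "1 / 2 \<le> exp (- f y)" by (simp add: exp_minus)
    then show ?thesis by (simp add: field_simps)
  qed
  have "(\<Sum>y\<in>N. 1 / (1 + exp (- f y))) \<le> real (card N) * (2 / 3)"
    by (rule sum_bounded_above[OF term_le])
  also have "\<dots> \<le> real (card N) - 1" using assms(2) by simp
  finally show ?thesis .
qed

theorem corollary4p3:
  fixes X :: "'a set" and E :: "'a set set" and l :: "'a set \<Rightarrow> real"
  assumes "weighted_tree X E l"
  shows "(\<forall>x\<in>X. (\<Sum>e\<in>{e\<in>E. x \<in> e}. 1 / (1 + exp (- l e))) \<le> real (degree E x) - 1
            \<longrightarrow> x \<notin> support X (maxdiv_measure X E l))
       \<and> ((\<forall>e\<in>E. l e \<le> ln 2) \<longrightarrow>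
            (\<forall>x\<in>X. degree E x \<ge> 3 \<longrightarrow> x \<notin> support X (maxdiv_measure X E l)))"
proof -
  have g: "simple_graph X E" using assms unfolding weighted_tree_def is_tree_def by blast
  have short: "(\<Sum>y\<in>neighbours E x. 1 / (1 + exp (- l {x, y}))) \<le> real (card (neighbours E x)) - 1"
    if "\<forall>e\<in>E. l e \<le> ln 2" "3 \<le> degree E x" for x
    using sum_logistic_le_card_minus_one[of "neighbours E x" "\<lambda>y. l {x, y}"] that
    unfolding degree_eq_card_neighbours neighbours_def by simp
  show ?thesis
    using notin_support_maxdiv_measure[OF assms] short
    unfolding sum_edges_at[OF g] degree_eq_card_neighbours by blast
qed

end
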